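(* Let $S,Q$ be disjoint finite sets, $\mathcal{V}_{SQ}$ a vector space on $S\uplus Q$, $Q'$ a disjoint copy of $Q$, and $\mathcal{V}_{QQ'}:=\mathcal{V}_{SQ}\leftrightarrow(\mathcal{V}_{SQ})_{SQ'}$. Then: 1. $\mathcal{V}_{QQ'}=(\mathcal{V}_{QQ'})_{Q'Q}$. 2. For every $f_Q\in\mathcal{V}_{QQ'}\circ Q$ we have $(f_Q,f_{Q'})\in\mathcal{V}_{QQ'}$, and for every $f_{Q'}\in\mathcal{V}_{QQ'}\circ Q'$ we have $(f_Q,f_{Q'})\in\mathcal{V}_{QQ'}$, where $f_Q,f_{Q'}$ are copies of each other. 3. $\mathcal{V}_{QQ'}\circ Q=\mathcal{V}_{SQ}\circ Q$ and $\mathcal{V}_{QQ'}\times Q=\mathcal{V}_{SQ}\times Q$. 4. $(\mathcal{V}_{SQ})_{SQ'}=\mathcal{V}_{SQ}\leftrightarrow\mathcal{V}_{QQ'}$ and $\mathcal{V}_{SQ}=(\mathcal{V}_{SQ})_{SQ'}\leftrightarrow\mathcal{V}_{QQ'}$.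
   Context: Vectors on a finite set $X$ are functions $X\to\mathbb{F}$; vector spaces on $X$ are subspaces of $\mathbb{F}^X$. For $\mathcal{V}_{AB}$ on $A\uplus B$: $\mathcal{V}_{AB}\circ A:=\{f_A:(f_A,f_B)\in\mathcal{V}_{AB}\}$, $\mathcal{V}_{AB}\times A:=\{f_A:(f_A,0_B)\in\mathcal{V}_{AB}\}$. For spaces $\mathcal{V}_{AB}$ on $A\uplus B$ and $\mathcal{V}_{BC}$ on $B\uplus C$ ($A,B,C$ pairwise disjoint), $\mathcal{V}_{AB}\leftrightarrow\mathcal{V}_{BC}:=\{(f_A,g_C):\exists h_B,\ (f_A,h_B)\in\mathcal{V}_{AB},(h_B,g_C)\in\mathcal{V}_{BC}\}$. If $Q'$ is a disjoint copy of $Q$ (bijection $e\mapsto e'$), a vector $f_{Q'}$ is the copy of $f_Q$ if $f_{Q'}(e')=f_Q(e)$; $(\mathcal{V}_{SQ})_{SQ'}:=\{(f_S,f_{Q'}):(f_S,f_Q)\in\mathcal{V}_{SQ}\}$; and $(\mathcal{V}_{QQ'})_{Q'Q}:=\{(g_Q,f_{Q'}):(f_Q,g_{Q'})\in\mathcal{V}_{QQ'}\}$, where $g_Q$ is the copy of $g_{Q'}$ and $f_{Q'}$ the copy of $f_Q$ (interchange of the roles of $Q$ and $Q'$). *)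

theory Defs
  imports Main
begin

text \<open>Vectors on a finite set X are modelled as functions e \<Rightarrow> F (F a field) that
  vanish outside X. A pair (f_A, f_B) with A, B disjoint is the function that agrees
  with f_A on A and with f_B on B (i.e. their pointwise sum).\<close>

definition vec_on :: "'e set \<Rightarrow> ('e \<Rightarrow> 'a::field) \<Rightarrow> bool" where
  "vec_on X f \<longleftrightarrow> (\<forall>x. x \<notin> X \<longrightarrow> f x = 0)"

definition vspace_on :: "'e set \<Rightarrow> ('e \<Rightarrow> 'a::field) set \<Rightarrow> bool" where
  "vspace_on X V \<longleftrightarrow> (\<forall>f\<in>V. vec_on X f) \<and> (\<lambda>x. 0) \<in> V \<and>
     (\<forall>f\<in>V. \<forall>g\<in>V. (\<lambda>x. f x + g x) \<in> V) \<and>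
     (\<forall>c f. f \<in> V \<longrightarrow> (\<lambda>x. c * f x) \<in> V)"

definition restr :: "'e set \<Rightarrow> ('e \<Rightarrow> 'a::field) \<Rightarrow> 'e \<Rightarrow> 'a" where
  "restr A f = (\<lambda>x. if x \<in> A then f x else 0)"

definition vrestr :: "('e \<Rightarrow> 'a::field) set \<Rightarrow> 'e set \<Rightarrow> ('e \<Rightarrow> 'a) set" where
  "vrestr V A = {restr A f | f. f \<in> V}"

definition vcontr :: "('e \<Rightarrow> 'a::field) set \<Rightarrow> 'e set \<Rightarrow> 'e set \<Rightarrow> ('e \<Rightarrow> 'a) set" where
  "vcontr V A B = {restr A f | f. f \<in> V \<and> (\<forall>x\<in>B. f x = 0)}"

definition vmatch :: "('e \<Rightarrow> 'a::field) set \<Rightarrow> ('e \<Rightarrow> 'a) set \<Rightarrow> 'e set \<Rightarrow> 'e set \<Rightarrow> 'e set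
    \<Rightarrow> ('e \<Rightarrow> 'a) set" where
  "vmatch VAB VBC A B C = {h. \<exists>f g. f \<in> VAB \<and> g \<in> VBC \<and> restr B f = restr B g \<and>
       h = (\<lambda>x. restr A f x + restr C g x)}"

text \<open>Copying: Q' = c ` Q with c injective on Q. copyv maps f_Q to its copy f_Q'
  (reading f on Q); uncopyv maps g_Q' to its copy g_Q (reading g on Q').\<close>
definition copyv :: "('e \<Rightarrow> 'e) \<Rightarrow> 'e set \<Rightarrow> ('e \<Rightarrow> 'a::field) \<Rightarrow> 'e \<Rightarrow> 'a" where
  "copyv c Q f = (\<lambda>y. if y \<in> c ` Q then f (inv_into Q c y) else 0)"

definition uncopyv :: "('e \<Rightarrow> 'e) \<Rightarrow> 'e set \<Rightarrow> ('e \<Rightarrow> 'a::field) \<Rightarrow> 'e \<Rightarrow> 'a" where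
  "uncopyv c Q g = (\<lambda>x. if x \<in> Q then g (c x) else 0)"

definition copy_space :: "'e set \<Rightarrow> ('e \<Rightarrow> 'e) \<Rightarrow> 'e set \<Rightarrow> ('e \<Rightarrow> 'a::field) set
    \<Rightarrow> ('e \<Rightarrow> 'a) set" where
  "copy_space S c Q V = {(\<lambda>x. restr S f x + copyv c Q f x) | f. f \<in> V}"

text \<open>(V_QQ')_{Q'Q}: (f_Q, g_Q') \<mapsto> (g_Q, f_Q')\<close>
definition swap_space :: "('e \<Rightarrow> 'e) \<Rightarrow> 'e set \<Rightarrow> ('e \<Rightarrow> 'a::field) set \<Rightarrow> ('e \<Rightarrow> 'a) set" where
  "swap_space c Q V = {(\<lambda>x. uncopyv c Q f x + copyv c Q f x) | f. f \<in> V}"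

end

theory Submission
  imports Defs
begin

text \<open>An element of \<open>V\<^sub>S\<^sub>Q \<leftrightarrow> (V\<^sub>S\<^sub>Q)\<^sub>S\<^sub>Q\<^sub>'\<close> is exactly a pair \<open>(f\<^sub>Q, g\<^sub>Q\<^sub>')\<close> with \<open>f, g \<in> V\<^sub>S\<^sub>Q\<close> agreeing
  on \<open>S\<close>. This condition is symmetric in \<open>f\<close> and \<open>g\<close>, which gives the swap invariance, and
  taking \<open>f = g\<close> gives the diagonal pairs and the restriction to \<open>Q\<close>. For the contraction
  one uses \<open>f - g\<close>, which vanishes on \<open>S\<close>. For the two compositions, \<open>(f\<^sub>S, f\<^sub>Q\<^sub>')\<close> is matched
  through the diagonal pair \<open>(f\<^sub>Q, f\<^sub>Q\<^sub>')\<close>; conversely, a matched \<open>h \<in> V\<^sub>S\<^sub>Q\<close> and pair \<open>(f\<^sub>Q, g\<^sub>Q\<^sub>')\<close>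
  recombine into \<open>h - f + g \<in> V\<^sub>S\<^sub>Q\<close> (resp. \<open>h - g + f\<close>).\<close>

lemma vspace_on_vanishes: "vspace_on X V \<Longrightarrow> f \<in> V \<Longrightarrow> x \<notin> X \<Longrightarrow> f x = 0"
  by (simp add: vspace_on_def vec_on_def)

lemma vspace_on_zero: "vspace_on X V \<Longrightarrow> (\<lambda>x. 0) \<in> V"
  by (simp add: vspace_on_def)

lemma vspace_on_add: "vspace_on X V \<Longrightarrow> f \<in> V \<Longrightarrow> g \<in> V \<Longrightarrow> (\<lambda>x. f x + g x) \<in> V"
  by (simp add: vspace_on_def)

lemma vspace_on_diff:
  assumes "vspace_on X V" "f \<in> V" "g \<in> V"
  shows "(\<lambda>x. f x - g x) \<in> V"
proof -
  have "(\<lambda>x. (-1) * g x) \<in> V"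
    using assms unfolding vspace_on_def by blast
  then have "(\<lambda>x. f x + (-1) * g x) \<in> V"
    using assms vspace_on_add by blast
  then show ?thesis by simp
qed

lemma vspace_on_add_diff:
  "vspace_on X V \<Longrightarrow> f \<in> V \<Longrightarrow> g \<in> V \<Longrightarrow> h \<in> V \<Longrightarrow> (\<lambda>x. f x + g x - h x) \<in> V"
  using vspace_on_add vspace_on_diff by blast

lemma copyv_image [simp]: "inj_on c Q \<Longrightarrow> q \<in> Q \<Longrightarrow> copyv c Q f (c q) = f q"
  by (simp add: copyv_def)

lemma copyv_outside [simp]: "y \<notin> c ` Q \<Longrightarrow> copyv c Q f y = 0"
  by (simp add: copyv_def)

lemma restr_eq_iff: "restr A f = restr A g \<longleftrightarrow> (\<forall>x\<in>A. f x = g x)"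
  by (auto simp: restr_def fun_eq_iff)

lemma copyv_eq_iff: "inj_on c Q \<Longrightarrow> copyv c Q f = copyv c Q g \<longleftrightarrow> (\<forall>q\<in>Q. f q = g q)"
  by (auto simp: copyv_def fun_eq_iff)

lemma copyv_restr: "copyv c Q (restr Q f) = copyv c Q f"
  by (auto simp: copyv_def restr_def fun_eq_iff inv_into_into)

lemma uncopyv_copyv: "inj_on c Q \<Longrightarrow> uncopyv c Q (copyv c Q f) = restr Q f"
  by (auto simp: uncopyv_def restr_def)

definition pair_with_copy :: "('e \<Rightarrow> 'e) \<Rightarrow> 'e set \<Rightarrow> ('e \<Rightarrow> 'a::field) \<Rightarrow> ('e \<Rightarrow> 'a)
    \<Rightarrow> 'e \<Rightarrow> 'a" where
  "pair_with_copy c Q f g = (\<lambda>x. restr Q f x + copyv c Q g x)"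

locale vspace_with_copy =
  fixes S Q :: "'e set" and c :: "'e \<Rightarrow> 'e" and V :: "('e \<Rightarrow> 'a::field) set"
  assumes disjoint: "S \<inter> Q = {}"
    and inj: "inj_on c Q"
    and copy_disjoint: "c ` Q \<inter> (S \<union> Q) = {}"
    and vspace: "vspace_on (S \<union> Q) V"
begin

definition VQQ' :: "('e \<Rightarrow> 'a) set" where
  "VQQ' = vmatch V (copy_space S c Q V) Q S (c ` Q)"

abbreviation to_SQ' :: "('e \<Rightarrow> 'a) \<Rightarrow> 'e \<Rightarrow> 'a" where
  "to_SQ' f \<equiv> \<lambda>x. restr S f x + copyv c Q f x"

abbreviation pair :: "('e \<Rightarrow> 'a) \<Rightarrow> ('e \<Rightarrow> 'a) \<Rightarrow> 'e \<Rightarrow> 'a" where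
  "pair \<equiv> pair_with_copy c Q"

lemma copy_notin_S [simp]: "q \<in> Q \<Longrightarrow> c q \<notin> S"
  and copy_notin_Q [simp]: "q \<in> Q \<Longrightarrow> c q \<notin> Q"
  and S_notin_copy [simp]: "x \<in> S \<Longrightarrow> x \<notin> c ` Q"
  and Q_notin_copy [simp]: "x \<in> Q \<Longrightarrow> x \<notin> c ` Q"
  and S_notin_Q [simp]: "x \<in> S \<Longrightarrow> x \<notin> Q"
  using disjoint copy_disjoint by auto

lemmas point_simps = restr_def uncopyv_def pair_with_copy_def copyv_image[OF inj]

lemma ext_regions:
  assumes "\<And>x. x \<in> S \<Longrightarrow> f x = g x" and "\<And>x. x \<in> Q \<Longrightarrow> f x = g x"
    and "\<And>q. q \<in> Q \<Longrightarrow> f (c q) = g (c q)"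
    and "\<And>x. x \<notin> S \<Longrightarrow> x \<notin> Q \<Longrightarrow> x \<notin> c ` Q \<Longrightarrow> f x = g x"
  shows "f = g"
  using assms by blast

lemma restr_Q_pair [simp]: "restr Q (pair f g) = restr Q f"
  by (rule ext_regions) (auto simp: point_simps)

lemma restr_copy_pair [simp]: "restr (c ` Q) (pair f g) = copyv c Q g"
  by (rule ext_regions) (auto simp: point_simps)

lemma restr_S_to_SQ' [simp]: "restr S (to_SQ' f) = restr S f"
  by (rule ext_regions) (auto simp: point_simps)

lemma restr_copy_to_SQ' [simp]: "restr (c ` Q) (to_SQ' f) = copyv c Q f"
  by (rule ext_regions) (auto simp: point_simps)

lemma swap_pair: "(\<lambda>x. uncopyv c Q (pair f g) x + copyv c Q (pair f g) x) = pair g f"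
  by (rule ext_regions) (auto simp: point_simps)

lemma mem_VQQ'_iff:
  "h \<in> VQQ' \<longleftrightarrow> (\<exists>f\<in>V. \<exists>g\<in>V. (\<forall>x\<in>S. f x = g x) \<and> h = pair f g)"
proof
  assume "h \<in> VQQ'"
  then obtain f g where "f \<in> V" and "g \<in> V" and match: "restr S f = restr S (to_SQ' g)"
    and h: "h = (\<lambda>x. restr Q f x + restr (c ` Q) (to_SQ' g) x)"
    unfolding VQQ'_def vmatch_def copy_space_def by blast
  moreover have "\<forall>x\<in>S. f x = g x"
    using match by (simp add: restr_eq_iff)
  moreover have "h = pair f g"
    by (simp add: h pair_with_copy_def)
  ultimately show "\<exists>f\<in>V. \<exists>g\<in>V. (\<forall>x\<in>S. f x = g x) \<and> h = pair f g"
    by blast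
next
  assume "\<exists>f\<in>V. \<exists>g\<in>V. (\<forall>x\<in>S. f x = g x) \<and> h = pair f g"
  then obtain f g where "f \<in> V" and "g \<in> V" and agree: "\<forall>x\<in>S. f x = g x"
    and h: "h = pair f g" by blast
  moreover have "to_SQ' g \<in> copy_space S c Q V"
    unfolding copy_space_def using \<open>g \<in> V\<close> by blast
  moreover have "restr S f = restr S (to_SQ' g)"
    using agree by (simp add: restr_eq_iff)
  moreover have "h = (\<lambda>x. restr Q f x + restr (c ` Q) (to_SQ' g) x)"
    by (simp add: h pair_with_copy_def)
  ultimately show "h \<in> VQQ'"
    unfolding VQQ'_def vmatch_def by blast
qed

lemma pair_in_VQQ': "f \<in> V \<Longrightarrow> g \<in> V \<Longrightarrow> \<forall>x\<in>S. f x = g x \<Longrightarrow> pair f g \<in> VQQ'"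
  unfolding mem_VQQ'_iff by blast

lemma VQQ'_eq_swap_space: "VQQ' = swap_space c Q VQQ'"
proof (intro equalityI subsetI)
  fix h assume "h \<in> VQQ'"
  then obtain f g where "f \<in> V" "g \<in> V" "\<forall>x\<in>S. f x = g x" and h: "h = pair f g"
    unfolding mem_VQQ'_iff by blast
  then have "pair g f \<in> VQQ'"
    by (simp add: pair_in_VQQ')
  moreover have "h = (\<lambda>x. uncopyv c Q (pair g f) x + copyv c Q (pair g f) x)"
    unfolding h swap_pair ..
  ultimately show "h \<in> swap_space c Q VQQ'"
    unfolding swap_space_def by blast
next
  fix h assume "h \<in> swap_space c Q VQQ'"
  then obtain f g where "f \<in> V" "g \<in> V" "\<forall>x\<in>S. f x = g x"
    and "h = (\<lambda>x. uncopyv c Q (pair f g) x + copyv c Q (pair f g) x)"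
    unfolding swap_space_def mem_VQQ'_iff by blast
  then show "h \<in> VQQ'"
    by (simp add: swap_pair pair_in_VQQ')
qed

lemma vrestr_VQQ'_Q: "vrestr VQQ' Q = vrestr V Q"
proof (intro equalityI subsetI)
  fix h assume "h \<in> vrestr VQQ' Q"
  then show "h \<in> vrestr V Q"
    unfolding vrestr_def mem_VQQ'_iff by auto
next
  fix h assume "h \<in> vrestr V Q"
  then obtain f where "f \<in> V" and "h = restr Q (pair f f)"
    unfolding vrestr_def by auto
  then show "h \<in> vrestr VQQ' Q"
    unfolding vrestr_def using pair_in_VQQ' by blast
qed

lemma vrestr_VQQ'_copy: "vrestr VQQ' (c ` Q) = copyv c Q ` V"
proof (intro equalityI subsetI)
  fix h assume "h \<in> vrestr VQQ' (c ` Q)"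
  then show "h \<in> copyv c Q ` V"
    unfolding vrestr_def mem_VQQ'_iff by auto
next
  fix h assume "h \<in> copyv c Q ` V"
  then obtain f where "f \<in> V" and "h = restr (c ` Q) (pair f f)"
    by auto
  then show "h \<in> vrestr VQQ' (c ` Q)"
    unfolding vrestr_def using pair_in_VQQ' by blast
qed

lemma diagonal_pair_in_VQQ':
  assumes "f \<in> vrestr VQQ' Q"
  shows "(\<lambda>x. f x + copyv c Q f x) \<in> VQQ'"
proof -
  obtain g where "g \<in> V" and "f = restr Q g"
    using assms[unfolded vrestr_VQQ'_Q] unfolding vrestr_def by blast
  then have "(\<lambda>x. f x + copyv c Q f x) = pair g g"
    by (simp add: pair_with_copy_def copyv_restr)
  then show ?thesis
    using pair_in_VQQ' \<open>g \<in> V\<close> by simp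
qed

lemma diagonal_pair_in_VQQ'_copy:
  assumes "g \<in> vrestr VQQ' (c ` Q)"
  shows "(\<lambda>x. uncopyv c Q g x + g x) \<in> VQQ'"
proof -
  obtain f where "f \<in> V" and "g = copyv c Q f"
    using assms[unfolded vrestr_VQQ'_copy] by blast
  then have "(\<lambda>x. uncopyv c Q g x + g x) = pair f f"
    by (simp add: pair_with_copy_def uncopyv_copyv[OF inj])
  then show ?thesis
    using pair_in_VQQ' \<open>f \<in> V\<close> by simp
qed

lemma vcontr_VQQ'_Q: "vcontr VQQ' Q (c ` Q) = vcontr V Q S"
proof (intro equalityI subsetI)
  fix h assume "h \<in> vcontr VQQ' Q (c ` Q)"
  then obtain f g where f: "f \<in> V" and g: "g \<in> V" and agree: "\<forall>x\<in>S. f x = g x"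
    and vanish: "\<forall>y\<in>c ` Q. pair f g y = 0" and h: "h = restr Q (pair f g)"
    unfolding vcontr_def mem_VQQ'_iff by blast
  have "\<forall>q\<in>Q. g q = 0"
    using vanish by (simp add: point_simps)
  then have "h = restr Q (\<lambda>x. f x - g x)"
    by (simp add: h restr_eq_iff)
  moreover have "(\<lambda>x. f x - g x) \<in> V"
    using vspace_on_diff[OF vspace f g] .
  ultimately show "h \<in> vcontr V Q S"
    unfolding vcontr_def using agree by auto
next
  fix h assume "h \<in> vcontr V Q S"
  then obtain f where f: "f \<in> V" and vanish: "\<forall>x\<in>S. f x = 0" and h: "h = restr Q f"
    unfolding vcontr_def by blast
  have "pair f (\<lambda>x. 0) \<in> VQQ'"
    using pair_in_VQQ' f vanish vspace_on_zero[OF vspace] by simp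
  moreover have "\<forall>y\<in>c ` Q. pair f (\<lambda>x. 0) y = 0"
    by (auto simp: point_simps)
  moreover have "h = restr Q (pair f (\<lambda>x. 0))"
    by (simp add: h)
  ultimately show "h \<in> vcontr VQQ' Q (c ` Q)"
    unfolding vcontr_def by blast
qed

lemma copy_space_eq_vmatch_VQQ': "copy_space S c Q V = vmatch V VQQ' S Q (c ` Q)"
proof (intro equalityI subsetI)
  fix w assume "w \<in> copy_space S c Q V"
  then obtain f where f: "f \<in> V" and w: "w = to_SQ' f"
    unfolding copy_space_def by blast
  have "pair f f \<in> VQQ'" and "restr Q f = restr Q (pair f f)"
    and "w = (\<lambda>x. restr S f x + restr (c ` Q) (pair f f) x)"
    using f w by (simp_all add: pair_in_VQQ')
  then show "w \<in> vmatch V VQQ' S Q (c ` Q)"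
    unfolding vmatch_def using f by blast
next
  fix w assume "w \<in> vmatch V VQQ' S Q (c ` Q)"
  then obtain h f g where h: "h \<in> V" and f: "f \<in> V" and g: "g \<in> V"
    and agree: "\<forall>x\<in>S. f x = g x" and match: "restr Q h = restr Q f"
    and w: "w = (\<lambda>x. restr S h x + copyv c Q g x)"
    unfolding vmatch_def mem_VQQ'_iff by auto
  have h_on_Q: "\<forall>q\<in>Q. h q = f q"
    using match by (simp add: restr_eq_iff)
  define k where "k = (\<lambda>x. h x + g x - f x)"
  have "k \<in> V"
    unfolding k_def using vspace_on_add_diff[OF vspace h g f] .
  moreover have "w = to_SQ' k"
    unfolding w k_def by (rule ext_regions) (auto simp: point_simps agree h_on_Q)
  ultimately show "w \<in> copy_space S c Q V"
    unfolding copy_space_def by blast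
qed

lemma vmatch_copy_space_VQQ'_eq: "vmatch (copy_space S c Q V) VQQ' S (c ` Q) Q = V"
proof (intro equalityI subsetI)
  fix v assume "v \<in> vmatch (copy_space S c Q V) VQQ' S (c ` Q) Q"
  then obtain h f g where h: "h \<in> V" and f: "f \<in> V" and g: "g \<in> V"
    and agree: "\<forall>x\<in>S. f x = g x" and match: "copyv c Q h = copyv c Q g"
    and v: "v = (\<lambda>x. restr S h x + restr Q f x)"
    unfolding vmatch_def mem_VQQ'_iff copy_space_def by auto
  have h_on_Q: "\<forall>q\<in>Q. h q = g q"
    using match by (simp add: copyv_eq_iff[OF inj])
  have "v = (\<lambda>x. h x + f x - g x)"
    unfolding v by (rule ext_regions)
      (auto simp: point_simps agree h_on_Q vspace_on_vanishes[OF vspace h]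
        vspace_on_vanishes[OF vspace f] vspace_on_vanishes[OF vspace g])
  then show "v \<in> V"
    using vspace_on_add_diff[OF vspace h f g] by simp
next
  fix f assume f: "f \<in> V"
  have "to_SQ' f \<in> copy_space S c Q V"
    unfolding copy_space_def using f by blast
  moreover have "pair f f \<in> VQQ'"
    using f by (simp add: pair_in_VQQ')
  moreover have "restr (c ` Q) (to_SQ' f) = restr (c ` Q) (pair f f)"
    by simp
  moreover have "f = (\<lambda>x. restr S (to_SQ' f) x + restr Q (pair f f) x)"
    by (rule ext_regions) (auto simp: point_simps vspace_on_vanishes[OF vspace f])
  ultimately show "f \<in> vmatch (copy_space S c Q V) VQQ' S (c ` Q) Q"
    unfolding vmatch_def by blast
qed

end

theorem theorem5:
  fixes S Q :: "'e set" and c :: "'e \<Rightarrow> 'e" and V :: "('e \<Rightarrow> 'a::field) set"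
  assumes "finite S" and "finite Q" and "S \<inter> Q = {}"
    and "inj_on c Q" and "c ` Q \<inter> (S \<union> Q) = {}"
    and "vspace_on (S \<union> Q) V"
  defines "VQQ \<equiv> vmatch V (copy_space S c Q V) Q S (c ` Q)"
  shows "VQQ = swap_space c Q VQQ \<and>
         (\<forall>f \<in> vrestr VQQ Q. (\<lambda>x. f x + copyv c Q f x) \<in> VQQ) \<and>
         (\<forall>g \<in> vrestr VQQ (c ` Q). (\<lambda>x. uncopyv c Q g x + g x) \<in> VQQ) \<and>
         vrestr VQQ Q = vrestr V Q \<and> vcontr VQQ Q (c ` Q) = vcontr V Q S \<and>
         copy_space S c Q V = vmatch V VQQ S Q (c ` Q) \<and>
         V = vmatch (copy_space S c Q V) VQQ S (c ` Q) Q"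
proof -
  interpret vspace_with_copy S Q c V
    using assms(3-6) by unfold_locales
  show ?thesis
    unfolding VQQ_def VQQ'_def[symmetric]
    using VQQ'_eq_swap_space diagonal_pair_in_VQQ' diagonal_pair_in_VQQ'_copy vrestr_VQQ'_Q
      vcontr_VQQ'_Q copy_space_eq_vmatch_VQQ' vmatch_copy_space_VQQ'_eq
    by simp
qed

end
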